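(* Let $\mathbb{K}\in\{\mathbb{R},\mathbb{C}\}$, let $\mathbf{R}_U\in\mathbb{K}^{n\times n}$ be self-adjoint positive definite, and let $U=\mathbb{K}^n$ carry the norm $\|\mathbf{x}\|_U:=\langle\mathbf{R}_U\mathbf{x},\mathbf{x}\rangle^{1/2}$. Let $\mathbf{u}^1,\dots,\mathbf{u}^m\in U$ and $\mathbf{U}_m:=[\mathbf{u}^1,\dots,\mathbf{u}^m]\in\mathbb{K}^{n\times m}$. Let $\mathbf{Q}\in\mathbb{K}^{s\times n}$ satisfy $\mathbf{Q}^{\mathrm{H}}\mathbf{Q}=\mathbf{R}_U$, and let $\mathbf{B}_r^*\in\mathbb{K}^{s\times m}$ be a best rank-$r$ approximation of $\mathbf{Q}\mathbf{U}_m$ with respect to the Frobenius norm $\|\cdot\|_F$. Then for any rank-$r$ matrix $\mathbf{B}_r\in\mathbb{K}^{s\times m}$, $$\frac1m\|\mathbf{Q}\mathbf{U}_m-\mathbf{B}_r^*\|_F^2\le\frac1m\sum_{i=1}^m\|\mathbf{u}^i-\mathbf{P}_{U_r}\mathbf{u}^i\|_U^2\le\frac1m\|\mathbf{Q}\mathbf{U}_m-\mathbf{B}_r\|_F^2,$$ where $U_r:=\{\mathbf{R}_U^{-1}\mathbf{Q}^{\mathrm{H}}\mathbf{b}:\mathbf{b}\in\mathrm{span}(\mathbf{B}_r)\}$ and $\mathbf{P}_{U_r}$ is the orthogonal projection onto $U_r$ with respect to $\|\cdot\|_U$.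
   Context: $\mathrm{span}(\mathbf{B}_r)$ denotes the column space of $\mathbf{B}_r$; $\mathbf{M}^{\mathrm{H}}$ is the (conjugate) transpose. *)

theory Defs
  imports "Jordan_Normal_Form.DL_Rank" "Jordan_Normal_Form.Schur_Decomposition"
begin

text \<open>All notions below are stated generically for
  a type that is both a conjugatable (ordered) field and a real normed field; the main
  theorem instantiates them for real and for complex separately.\<close>

definition frob_norm :: "'a :: {conjugatable_field, real_normed_field} mat \<Rightarrow> real" where
  "frob_norm A = sqrt (\<Sum>i<dim_row A. \<Sum>j<dim_col A. (norm (A $$ (i, j)))\<^sup>2)"

text \<open>Self-adjoint positive definite n x n matrix (inner product <v,w> = v . conj w).\<close>
definition self_adjoint_pd :: "nat \<Rightarrow> 'a :: conjugatable_ordered_field mat \<Rightarrow> bool" where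
  "self_adjoint_pd n R \<longleftrightarrow> R \<in> carrier_mat n n \<and> mat_adjoint R = R \<and>
     (\<forall>x \<in> carrier_vec n. x \<noteq> 0\<^sub>v n \<longrightarrow> (R *\<^sub>v x) \<bullet>c x > 0)"

text \<open>The energy norm ||x||_U = <R x, x>^(1/2); the inner product is real and nonnegative
  for positive definite R, the norm just takes that real value.\<close>
definition U_norm :: "'a :: {conjugatable_field, real_normed_field} mat \<Rightarrow> 'a vec \<Rightarrow> real" where
  "U_norm R x = sqrt (norm ((R *\<^sub>v x) \<bullet>c x))"

definition U_proj :: "'a :: conjugatable_field mat \<Rightarrow> 'a vec set \<Rightarrow> 'a vec \<Rightarrow> 'a vec" where
  "U_proj R W x = (THE p. p \<in> W \<and> (\<forall>w \<in> W. (R *\<^sub>v (x - p)) \<bullet>c w = 0))"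

definition inv_mat :: "'a :: field mat \<Rightarrow> 'a mat" where
  "inv_mat A = (SOME B. B \<in> carrier_mat (dim_row A) (dim_row A) \<and>
      A * B = 1\<^sub>m (dim_row A) \<and> B * A = 1\<^sub>m (dim_row A))"

definition best_rank_approx ::
  "nat \<Rightarrow> nat \<Rightarrow> nat \<Rightarrow> 'a :: {conjugatable_field, real_normed_field} mat \<Rightarrow> 'a mat \<Rightarrow> bool" where
  "best_rank_approx s m r A B \<longleftrightarrow> B \<in> carrier_mat s m \<and> vec_space.rank s B \<le> r \<and>
     (\<forall>C \<in> carrier_mat s m. vec_space.rank s C \<le> r \<longrightarrow> frob_norm (A - B) \<le> frob_norm (A - C))"

definition U_r_space :: "nat \<Rightarrow> 'a :: conjugatable_field mat \<Rightarrow> 'a mat \<Rightarrow> 'a mat \<Rightarrow> 'a vec set" where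
  "U_r_space s R Q Br = {inv_mat R *\<^sub>v (mat_adjoint Q *\<^sub>v b) | b. b \<in> vec_space.col_space s Br}"

end

theory Submission
  imports Defs
begin

text \<open>
  Since \<open>R = Q\<^sup>H Q\<close>, the energy norm is \<open>\<parallel>x\<parallel>\<^sub>U = \<parallel>Q x\<parallel>\<close>, and the \<open>U\<close>-orthogonal projection
  \<open>p\<close> of \<open>x\<close> onto \<open>U\<^sub>r\<close> is characterised by \<open>Q (x - p) \<bottom> Q w\<close> for all \<open>w \<in> U\<^sub>r\<close>; it exists by the
  normal equations of least squares in \<open>\<real>\<^sup>s\<close> resp. \<open>\<complex>\<^sup>s\<close>.

  Upper bound: for a column \<open>b\<close> of \<open>B\<^sub>r\<close> the vector \<open>R\<^sup>-\<^sup>1 Q\<^sup>H b\<close> lies in \<open>U\<^sub>r\<close>, and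
  \<open>\<langle>Q y, b\<rangle> = \<langle>Q y, Q R\<^sup>-\<^sup>1 Q\<^sup>H b\<rangle>\<close>, so \<open>Q (x - p)\<close> is orthogonal to \<open>Q p - b\<close> and Pythagoras gives
  \<open>\<parallel>x - p\<parallel>\<^sub>U \<le> \<parallel>Q x - b\<parallel>\<close> column by column.

  Lower bound: the matrix whose columns are the \<open>Q p\<close> has all columns in \<open>Q U\<^sub>r\<close>, which is spanned
  by \<open>r\<close> vectors, so it has rank at most \<open>r\<close>; its Frobenius distance to \<open>Q U\<^sub>m\<close> is exactly the sum of
  the projection errors, and the best rank-\<open>r\<close> approximation does at least as well.
\<close>

section \<open>Scalars with a norm-compatible conjugation\<close>

class conjugatable_normed_field = conjugatable_ordered_field + real_normed_field +
  assumes mult_conjugate_eq_scaleR_norm_sq: "a * conjugate a = (norm a)\<^sup>2 *\<^sub>R 1"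

lemma mult_conjugate_eq_norm_sq:
  "(a :: 'a :: conjugatable_normed_field) * conjugate a = of_real ((norm a)\<^sup>2)"
  unfolding of_real_def by (rule mult_conjugate_eq_scaleR_norm_sq)

instance real :: conjugatable_normed_field
  by standard (simp add: power2_eq_square)

instance complex :: conjugatable_normed_field
  by standard (metis complex_norm_square conjugate_complex_def mult.right_neutral scaleR_conv_of_real)

definition sq_norm_vec :: "'a :: real_normed_field vec \<Rightarrow> real" where
  "sq_norm_vec v = (\<Sum>i<dim_vec v. (norm (v $ i))\<^sup>2)"

lemma sq_norm_vec_nonneg: "sq_norm_vec v \<ge> 0"
  unfolding sq_norm_vec_def by (intro sum_nonneg) simp

lemma cscalar_prod_self: "v \<bullet>c v = of_real (sq_norm_vec (v :: 'a :: conjugatable_normed_field vec))"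
  by (simp add: scalar_prod_def sq_norm_vec_def mult_conjugate_eq_norm_sq lessThan_atLeast0)

lemma cscalar_prod_swap:
  fixes v w :: "'a :: conjugatable_field vec"
  assumes "v \<in> carrier_vec n" "w \<in> carrier_vec n"
  shows "v \<bullet>c w = conjugate (w \<bullet>c v)"
  using assms by (metis conjugate_conjugate_sprod conjugate_vec_sprod_comm carrier_vec_conjugate)

lemma cscalar_prod_zero_swap:
  fixes v w :: "'a :: conjugatable_field vec"
  assumes "v \<in> carrier_vec n" "w \<in> carrier_vec n" "v \<bullet>c w = 0"
  shows "w \<bullet>c v = 0"
  using assms cscalar_prod_swap[OF assms(2,1)] by (simp add: conjugate_zero_iff)

lemma sq_norm_vec_add_orthogonal:
  fixes u v :: "'a :: conjugatable_normed_field vec"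
  assumes u: "u \<in> carrier_vec n" and v: "v \<in> carrier_vec n" and uv: "u \<bullet>c v = 0"
  shows "sq_norm_vec (u + v) = sq_norm_vec u + sq_norm_vec v"
proof -
  have "(u + v) \<bullet>c (u + v) = u \<bullet>c u + u \<bullet>c v + (v \<bullet>c u + v \<bullet>c v)"
    using u v by (simp add: conjugate_add_vec add_scalar_prod_distrib[of u n v] scalar_prod_add_distrib[of _ n])
  then have "(of_real (sq_norm_vec (u + v)) :: 'a) = of_real (sq_norm_vec u + sq_norm_vec v)"
    using uv cscalar_prod_zero_swap[OF u v uv] by (simp add: cscalar_prod_self)
  then show ?thesis
    using of_real_eq_iff by blast
qed

lemma frob_norm_sq_cols: "(frob_norm A)\<^sup>2 = (\<Sum>j<dim_col A. sq_norm_vec (col A j))"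
proof -
  have "(frob_norm A)\<^sup>2 = (\<Sum>i<dim_row A. \<Sum>j<dim_col A. (norm (A $$ (i, j)))\<^sup>2)"
    unfolding frob_norm_def by (intro real_sqrt_pow2 sum_nonneg) auto
  also have "\<dots> = (\<Sum>j<dim_col A. sq_norm_vec (col A j))"
    unfolding sq_norm_vec_def by (subst sum.swap) (auto intro!: sum.cong)
  finally show ?thesis .
qed

section \<open>Adjoints and the Gram inner product\<close>

lemma mat_adjoint_carrier_mat: "A \<in> carrier_mat m n \<Longrightarrow> mat_adjoint A \<in> carrier_mat n m"
  unfolding mat_adjoint_def by auto

lemma mat_adjoint_dim [simp]:
  "dim_row (mat_adjoint A) = dim_col A" "dim_col (mat_adjoint A) = dim_row A"
  unfolding mat_adjoint_def by auto

lemma mat_adjoint_index [simp]: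
  "i < dim_col A \<Longrightarrow> j < dim_row A \<Longrightarrow> mat_adjoint A $$ (i, j) = conjugate (A $$ (j, i))"
  unfolding mat_adjoint_def by (auto simp: mat_of_rows_index)

lemma mat_adjoint_cscalar_prod:
  fixes A :: "'a :: conjugatable_field mat"
  assumes A: "A \<in> carrier_mat k l" and v: "v \<in> carrier_vec l" and w: "w \<in> carrier_vec k"
  shows "(A *\<^sub>v v) \<bullet>c w = v \<bullet>c (mat_adjoint A *\<^sub>v w)"
proof -
  have "(A *\<^sub>v v) \<bullet>c w = (\<Sum>i<k. \<Sum>j<l. v $ j * (A $$ (i, j) * conjugate (w $ i)))"
    using A v w
    by (simp add: scalar_prod_def mult_mat_vec_def lessThan_atLeast0 sum_distrib_left sum_distrib_right
        ac_simps)
  also have "\<dots> = (\<Sum>j<l. v $ j * conjugate (\<Sum>i<k. conjugate (A $$ (i, j)) * w $ i))"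
    by (subst sum.swap) (simp add: sum_conjugate sum_distrib_left conjugate_dist_mul)
  also have "\<dots> = v \<bullet>c (mat_adjoint A *\<^sub>v w)"
    using A v w by (simp add: scalar_prod_def mult_mat_vec_def row_def lessThan_atLeast0)
  finally show ?thesis .
qed

lemma gram_cscalar_prod:
  fixes Q :: "'a :: conjugatable_field mat"
  assumes Q: "Q \<in> carrier_mat s n" and u: "u \<in> carrier_vec n" and w: "w \<in> carrier_vec n"
  shows "((mat_adjoint Q * Q) *\<^sub>v u) \<bullet>c w = (Q *\<^sub>v u) \<bullet>c (Q *\<^sub>v w)"
proof -
  have QH: "mat_adjoint Q \<in> carrier_mat n s"
    using Q by (rule mat_adjoint_carrier_mat)
  have "((mat_adjoint Q * Q) *\<^sub>v u) \<bullet>c w = (mat_adjoint Q *\<^sub>v (Q *\<^sub>v u)) \<bullet>c w"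
    by (simp add: assoc_mult_mat_vec[OF QH Q u])
  also have "\<dots> = conjugate (w \<bullet>c (mat_adjoint Q *\<^sub>v (Q *\<^sub>v u)))"
    by (rule cscalar_prod_swap[of _ n]) (use QH Q u w in auto)
  also have "\<dots> = (Q *\<^sub>v u) \<bullet>c (Q *\<^sub>v w)"
    using Q u w by (simp add: mat_adjoint_cscalar_prod[OF Q w, symmetric] cscalar_prod_swap[of "Q *\<^sub>v u" s])
  finally show ?thesis .
qed

lemma U_norm_gram_sq:
  fixes Q :: "'a :: conjugatable_normed_field mat"
  assumes "Q \<in> carrier_mat s n" "v \<in> carrier_vec n"
  shows "(U_norm (mat_adjoint Q * Q) v)\<^sup>2 = sq_norm_vec (Q *\<^sub>v v)"
  using gram_cscalar_prod[OF assms assms(2)]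
  by (simp add: U_norm_def cscalar_prod_self sq_norm_vec_nonneg)

section \<open>Column spaces, rank and orthogonal projection\<close>

lemma (in vec_space) exists_maximal_lin_indpt_subset:
  assumes "finite S"
  obtains U where "finite U" "maximal U (\<lambda>T. T \<subseteq> S \<and> lin_indpt T)"
proof -
  have "lin_indpt {}"
    unfolding lin_dep_def by auto
  then show ?thesis
    using maximal_exists_superset[OF assms, of "\<lambda>T. T \<subseteq> S \<and> lin_indpt T" "{}"] that by blast
qed

lemma (in vec_space) span_maximal_lin_indpt_subset:
  assumes S: "S \<subseteq> carrier_vec n" and U: "maximal U (\<lambda>T. T \<subseteq> S \<and> lin_indpt T)"
  shows "span U = span S"
proof -
  have US: "U \<subseteq> S" and indpt: "lin_indpt U"
    using U unfolding maximal_def by auto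
  have Uc: "U \<subseteq> carrier_vec n"
    using US S by auto
  have "S \<subseteq> span U"
  proof
    fix v assume v: "v \<in> S"
    show "v \<in> span U"
    proof (rule ccontr)
      assume v_notin: "v \<notin> span U"
      then have "v \<notin> U"
        using span_mem[OF Uc] by auto
      moreover have "lin_indpt (U \<union> {v})"
        using lin_dep_iff_in_span[OF Uc indpt _ \<open>v \<notin> U\<close>] v S v_notin by auto
      ultimately show False
        using U v US unfolding maximal_def by blast
    qed
  qed
  then show ?thesis
    using span_is_monotone[OF US] span_subsetI[OF Uc] by blast
qed

lemma (in vec_space) col_space_generated_by_rank_cols:
  assumes A: "A \<in> carrier_mat n nc"
  shows "\<exists>T \<in> carrier_mat n (rank A). col_space T = col_space A"
proof -
  have cols: "set (cols A) \<subseteq> carrier_vec n"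
    using A cols_dim by blast
  obtain U where "finite U" and U: "maximal U (\<lambda>T. T \<subseteq> set (cols A) \<and> lin_indpt T)"
    using exists_maximal_lin_indpt_subset[of "set (cols A)"] by blast
  then obtain ts where ts: "set ts = U" "distinct ts"
    using finite_distinct_list by blast
  have ts_carrier: "set ts \<subseteq> carrier_vec n"
    using ts U cols unfolding maximal_def by auto
  define T where "T = mat_of_cols n ts"
  have "length ts = rank A"
    using rank_card_indpt[OF A U] distinct_card[OF ts(2)] ts(1) by simp
  then have "T \<in> carrier_mat n (rank A)"
    unfolding T_def by auto
  moreover have "col_space T = col_space A"
    unfolding col_space_def T_def cols_mat_of_cols[OF ts_carrier] ts(1)
    using span_maximal_lin_indpt_subset[OF cols U] .
  ultimately show ?thesis by blast
qed

lemma (in vec_space) rank_le_if_cols_in_range: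
  assumes A: "A \<in> carrier_mat n nc" and K: "K \<in> carrier_mat n k"
    and cols: "\<And>j. j < nc \<Longrightarrow> \<exists>d \<in> carrier_vec k. col A j = K *\<^sub>v d"
  shows "rank A \<le> k"
proof -
  obtain U where U_fin: "finite U" and U: "maximal U (\<lambda>T. T \<subseteq> set (cols A) \<and> lin_indpt T)"
    using exists_maximal_lin_indpt_subset[of "set (cols A)"] by blast
  have indpt: "lin_indpt U" and U_cols: "U \<subseteq> set (cols A)"
    using U unfolding maximal_def by auto
  have K_cols: "set (cols K) \<subseteq> carrier_vec n"
    using K cols_dim by blast
  have "set (cols A) \<subseteq> col_space K"
    using A K cols unfolding col_space_eq[OF K] by (force simp: cols_def)
  then have "U \<subseteq> span (set (cols K))"
    using U_cols unfolding col_space_def by blast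
  then have "card U \<le> card (set (cols K))"
    using replacement[OF U_fin _ K_cols indpt] by auto
  also have "\<dots> \<le> k"
    using card_length[of "cols K"] K by simp
  finally show ?thesis
    using rank_card_indpt[OF A U] by simp
qed

lemma (in cof_vec_space) cscalar_prod_span_eq_0:
  assumes e: "e \<in> carrier_vec n" and S: "S \<subseteq> carrier_vec n"
    and orth: "\<And>u. u \<in> S \<Longrightarrow> e \<bullet>c u = 0" and v: "v \<in> span S"
  shows "e \<bullet>c v = 0"
proof -
  have "conjugate e \<bullet> u = 0" if "u \<in> S" for u
  proof -
    have "conjugate (conjugate e \<bullet> u) = e \<bullet>c u"
      using e S that by (intro conjugate_conjugate_sprod) auto
    then show ?thesis
      using orth[OF that] conjugate_zero_iff by metis
  qed
  then have "conjugate e \<in> orthogonal_complement S"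
    using e unfolding orthogonal_complement_def by auto
  then have "conjugate e \<bullet> v = 0"
    using in_orthogonal_complement_span[OF S] v unfolding orthogonal_complement_def by blast
  then show ?thesis
    using conjugate_conjugate_sprod[OF e span_closed[OF S v]] by simp
qed

lemma (in cof_vec_space) exists_orthogonal_projection_span:
  assumes S: "finite S" "S \<subseteq> carrier_vec n" and y: "y \<in> carrier_vec n"
  shows "\<exists>z \<in> span S. \<forall>v \<in> span S. (y - z) \<bullet>c v = 0"
proof -
  obtain U where "finite U" and U: "maximal U (\<lambda>T. T \<subseteq> S \<and> lin_indpt T)"
    using exists_maximal_lin_indpt_subset[OF S(1)] by blast
  then obtain ts where ts: "set ts = U" "distinct ts"
    using finite_distinct_list by blast
  have ts_carrier: "set ts \<subseteq> carrier_vec n" and indpt: "lin_indpt (set ts)"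
    using ts U S(2) unfolding maximal_def by auto
  define us where "us = gram_schmidt n ts"
  note gs = gram_schmidt_result[OF ts_carrier ts(2) indpt us_def]
  have span_us: "span (set us) = span S"
    using gs(1) ts(1) span_maximal_lin_indpt_subset[OF S(2) U] by simp
  have us: "set us \<subseteq> carrier_vec n" "distinct us"
    using gs by auto
  have adj: "adjuster n y us \<in> carrier_vec n"
    using y us by simp
  define z where "z = - adjuster n y us"
  have z: "z \<in> span (set us)"
    unfolding z_def using span_neg[OF us(1) adjuster_in_span[OF y us]] y us by simp
  have e: "y - z = adjuster n y us + y" "y - z \<in> carrier_vec n"
    unfolding z_def using adj y carrier_vecD[OF adj] by (auto intro!: eq_vecI)
  have "(y - z) \<bullet>c u = 0" if "u \<in> set us" for u
    using that adjust_zero[OF us(1) gs(2) y] unfolding e(1) by (metis in_set_conv_nth)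
  then show ?thesis
    using z span_us cscalar_prod_span_eq_0[OF e(2) us(1)] by auto
qed

lemma least_squares_normal_equations:
  fixes A :: "'a :: conjugatable_ordered_field mat"
  assumes A: "A \<in> carrier_mat n k" and y: "y \<in> carrier_vec n"
  shows "\<exists>c \<in> carrier_vec k. \<forall>d \<in> carrier_vec k. (y - A *\<^sub>v c) \<bullet>c (A *\<^sub>v d) = 0"
proof -
  interpret cof_vec_space n "TYPE('a)" .
  have range: "span (set (cols A)) = {A *\<^sub>v c | c. c \<in> carrier_vec k}"
    using col_space_eq[OF A] A unfolding col_space_def by auto
  have "set (cols A) \<subseteq> carrier_vec n"
    using A cols_dim by blast
  then obtain z where "z \<in> span (set (cols A))" and z: "\<forall>v \<in> span (set (cols A)). (y - z) \<bullet>c v = 0"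
    using exists_orthogonal_projection_span[OF finite_set _ y] by blast
  then obtain c where c: "c \<in> carrier_vec k" "z = A *\<^sub>v c"
    unfolding range by blast
  have "(y - A *\<^sub>v c) \<bullet>c (A *\<^sub>v d) = 0" if "d \<in> carrier_vec k" for d
    using z that unfolding range c(2) by blast
  with c(1) show ?thesis
    by blast
qed

section \<open>The \<open>U\<close>-orthogonal projection onto the range of a matrix\<close>

lemma self_adjoint_pd_inv_mat:
  assumes pd: "self_adjoint_pd n R"
  shows "inv_mat R \<in> carrier_mat n n" "R * inv_mat R = 1\<^sub>m n"
proof -
  have R: "R \<in> carrier_mat n n"
    using pd unfolding self_adjoint_pd_def by simp
  have "det R \<noteq> 0"
  proof
    assume "det R = 0"
    then obtain v where "v \<in> carrier_vec n" "v \<noteq> 0\<^sub>v n" "R *\<^sub>v v = 0\<^sub>v n"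
      using det_0_iff_vec_prod_zero_field[OF R] by blast
    then show False
      using pd unfolding self_adjoint_pd_def by fastforce
  qed
  then obtain B where "B \<in> carrier_mat n n" "R * B = 1\<^sub>m n" "B * R = 1\<^sub>m n"
    using det_non_zero_imp_unit[OF R, of "()"] unfolding Units_def ring_mat_def by auto
  then have "\<exists>B. B \<in> carrier_mat (dim_row R) (dim_row R) \<and>
      R * B = 1\<^sub>m (dim_row R) \<and> B * R = 1\<^sub>m (dim_row R)"
    using R by auto
  from someI_ex[OF this] show "inv_mat R \<in> carrier_mat n n" "R * inv_mat R = 1\<^sub>m n"
    unfolding inv_mat_def using R by auto
qed

lemma U_proj_eqI:
  fixes R :: "'a :: conjugatable_ordered_field mat"
  assumes pd: "self_adjoint_pd n R" and x: "x \<in> carrier_vec n"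
    and W: "W \<subseteq> carrier_vec n" "\<And>w w'. w \<in> W \<Longrightarrow> w' \<in> W \<Longrightarrow> w - w' \<in> W"
    and p: "p \<in> W" "\<forall>w \<in> W. (R *\<^sub>v (x - p)) \<bullet>c w = 0"
  shows "U_proj R W x = p"
  unfolding U_proj_def
proof (rule the_equality)
  show "p \<in> W \<and> (\<forall>w \<in> W. (R *\<^sub>v (x - p)) \<bullet>c w = 0)"
    using p by blast
next
  fix q assume q: "q \<in> W \<and> (\<forall>w \<in> W. (R *\<^sub>v (x - q)) \<bullet>c w = 0)"
  have R: "R \<in> carrier_mat n n"
    using pd unfolding self_adjoint_pd_def by simp
  have pc: "p \<in> carrier_vec n" and qc: "q \<in> carrier_vec n"
    using p q W(1) by auto
  have d: "q - p \<in> W" "q - p \<in> carrier_vec n"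
    using W p q by auto
  have "R *\<^sub>v (q - p) = R *\<^sub>v (x - p) - R *\<^sub>v (x - q)"
    using R x pc qc by (simp add: mult_minus_distrib_mat_vec) (auto intro!: eq_vecI)
  then have "(R *\<^sub>v (q - p)) \<bullet>c (q - p)
      = (R *\<^sub>v (x - p)) \<bullet>c (q - p) - (R *\<^sub>v (x - q)) \<bullet>c (q - p)"
    using R x pc qc d(2) by (simp add: minus_scalar_prod_distrib[of _ n])
  also have "\<dots> = 0"
    using p q d(1) by simp
  finally have "q - p = 0\<^sub>v n"
    using pd d(2) unfolding self_adjoint_pd_def by force
  show "q = p"
  proof (rule eq_vecI)
    fix i assume i: "i < dim_vec p"
    then have "(q - p) $ i = 0"
      using \<open>q - p = 0\<^sub>v n\<close> pc by simp
    then show "q $ i = p $ i"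
      using i pc qc by simp
  qed (use pc qc in simp)
qed

lemma U_proj_range:
  fixes Q N :: "'a :: conjugatable_ordered_field mat"
  assumes pd: "self_adjoint_pd n (mat_adjoint Q * Q)" and Q: "Q \<in> carrier_mat s n"
    and N: "N \<in> carrier_mat n k" and x: "x \<in> carrier_vec n"
    and W: "W = {N *\<^sub>v c | c. c \<in> carrier_vec k}"
  shows "U_proj (mat_adjoint Q * Q) W x \<in> W"
    and "\<forall>w \<in> W. ((mat_adjoint Q * Q) *\<^sub>v (x - U_proj (mat_adjoint Q * Q) W x)) \<bullet>c w = 0"
proof -
  have QN: "Q * N \<in> carrier_mat s k"
    using Q N by simp
  obtain c where c: "c \<in> carrier_vec k"
    and normal: "\<forall>d \<in> carrier_vec k. (Q *\<^sub>v x - (Q * N) *\<^sub>v c) \<bullet>c ((Q * N) *\<^sub>v d) = 0"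
    using least_squares_normal_equations[OF QN, of "Q *\<^sub>v x"] Q x by auto
  have orth: "\<forall>w \<in> W. ((mat_adjoint Q * Q) *\<^sub>v (x - N *\<^sub>v c)) \<bullet>c w = 0"
  proof
    fix w assume "w \<in> W"
    then obtain d where d: "d \<in> carrier_vec k" "w = N *\<^sub>v d"
      unfolding W by blast
    have "Q *\<^sub>v (x - N *\<^sub>v c) = Q *\<^sub>v x - (Q * N) *\<^sub>v c"
      using Q N x c by (simp add: mult_minus_distrib_mat_vec)
    then show "((mat_adjoint Q * Q) *\<^sub>v (x - N *\<^sub>v c)) \<bullet>c w = 0"
      using gram_cscalar_prod[OF Q, of "x - N *\<^sub>v c" w] normal Q N x c d by auto
  qed
  have "U_proj (mat_adjoint Q * Q) W x = N *\<^sub>v c"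
  proof (rule U_proj_eqI[OF pd x _ _ _ orth])
    show "W \<subseteq> carrier_vec n"
      unfolding W using N by auto
    show "w - w' \<in> W" if w: "w \<in> W" "w' \<in> W" for w w'
    proof -
      obtain d d' where "d \<in> carrier_vec k" "d' \<in> carrier_vec k" "w = N *\<^sub>v d" "w' = N *\<^sub>v d'"
        using w unfolding W by blast
      then have "w - w' = N *\<^sub>v (d - d')" "d - d' \<in> carrier_vec k"
        using N by (auto simp: mult_minus_distrib_mat_vec)
      then show ?thesis
        unfolding W by blast
    qed
    show "N *\<^sub>v c \<in> W"
      unfolding W using c by blast
  qed
  then show "U_proj (mat_adjoint Q * Q) W x \<in> W"
    and "\<forall>w \<in> W. ((mat_adjoint Q * Q) *\<^sub>v (x - U_proj (mat_adjoint Q * Q) W x)) \<bullet>c w = 0"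
    using orth c unfolding W by auto
qed

lemma cscalar_prod_eq_if_adjoint_eq:
  fixes Q :: "'a :: conjugatable_field mat"
  assumes Q: "Q \<in> carrier_mat s n" and y: "y \<in> carrier_vec n" and v: "v \<in> carrier_vec n"
    and b: "b \<in> carrier_vec s" and eq: "mat_adjoint Q *\<^sub>v (Q *\<^sub>v v) = mat_adjoint Q *\<^sub>v b"
  shows "(Q *\<^sub>v y) \<bullet>c b = (Q *\<^sub>v y) \<bullet>c (Q *\<^sub>v v)"
  using mat_adjoint_cscalar_prod[OF Q y b] mat_adjoint_cscalar_prod[OF Q y, of "Q *\<^sub>v v"] Q v eq
  by simp

lemma U_proj_residual_le:
  fixes Q :: "'a :: conjugatable_normed_field mat"
  assumes Q: "Q \<in> carrier_mat s n" and x: "x \<in> carrier_vec n" and b: "b \<in> carrier_vec s"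
    and W: "W \<subseteq> carrier_vec n"
    and p: "p \<in> W" "\<forall>w \<in> W. ((mat_adjoint Q * Q) *\<^sub>v (x - p)) \<bullet>c w = 0"
    and R_inv: "(mat_adjoint Q * Q) * inv_mat (mat_adjoint Q * Q) = 1\<^sub>m n"
      "inv_mat (mat_adjoint Q * Q) \<in> carrier_mat n n"
    and b_W: "inv_mat (mat_adjoint Q * Q) *\<^sub>v (mat_adjoint Q *\<^sub>v b) \<in> W"
  shows "sq_norm_vec (Q *\<^sub>v (x - p)) \<le> sq_norm_vec (Q *\<^sub>v x - b)"
proof -
  let ?R = "mat_adjoint Q * Q" and ?v = "inv_mat (mat_adjoint Q * Q) *\<^sub>v (mat_adjoint Q *\<^sub>v b)"
  define u where "u = Q *\<^sub>v (x - p)"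
  have QH: "mat_adjoint Q \<in> carrier_mat n s"
    using Q by (rule mat_adjoint_carrier_mat)
  have pc: "p \<in> carrier_vec n" and vc: "?v \<in> carrier_vec n"
    using p b_W W by auto
  have uc: "u \<in> carrier_vec s"
    unfolding u_def using Q x pc by simp
  have orth_W: "u \<bullet>c (Q *\<^sub>v w) = 0" if w: "w \<in> W" for w
  proof -
    have "x - p \<in> carrier_vec n" "w \<in> carrier_vec n"
      using x pc w W by auto
    then show ?thesis
      unfolding u_def using gram_cscalar_prod[OF Q] p(2) w by metis
  qed
  have "mat_adjoint Q *\<^sub>v (Q *\<^sub>v ?v) = ?R *\<^sub>v ?v"
    using assoc_mult_mat_vec[OF QH Q vc] by simp
  also have "\<dots> = (?R * inv_mat ?R) *\<^sub>v (mat_adjoint Q *\<^sub>v b)"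
    using assoc_mult_mat_vec[of ?R n n "inv_mat ?R" n "mat_adjoint Q *\<^sub>v b"] Q QH R_inv(2) b by simp
  also have "\<dots> = mat_adjoint Q *\<^sub>v b"
    using QH b unfolding R_inv(1) by simp
  finally have "u \<bullet>c b = u \<bullet>c (Q *\<^sub>v ?v)"
    unfolding u_def using x pc by (intro cscalar_prod_eq_if_adjoint_eq[OF Q _ vc b]) auto
  then have orth_b: "u \<bullet>c b = 0"
    using orth_W[OF b_W] by simp
  have Qp: "Q *\<^sub>v p \<in> carrier_vec s"
    using Q pc by simp
  have "(Q *\<^sub>v p - b) \<bullet>c u = (Q *\<^sub>v p) \<bullet>c u - b \<bullet>c u"
    by (rule minus_scalar_prod_distrib[of _ s]) (use uc Qp b in auto)
  also have "\<dots> = 0"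
    using cscalar_prod_zero_swap[OF uc Qp orth_W[OF p(1)]] cscalar_prod_zero_swap[OF uc b orth_b] by simp
  finally have orth: "u \<bullet>c (Q *\<^sub>v p - b) = 0"
    using Qp b by (intro cscalar_prod_zero_swap[OF _ uc]) auto
  have "u = Q *\<^sub>v x - Q *\<^sub>v p"
    unfolding u_def using Q x pc by (rule mult_minus_distrib_mat_vec)
  then have "Q *\<^sub>v x - b = u + (Q *\<^sub>v p - b)"
    using Q x Qp b by (intro eq_vecI) auto
  then have "sq_norm_vec (Q *\<^sub>v x - b) = sq_norm_vec u + sq_norm_vec (Q *\<^sub>v p - b)"
    using sq_norm_vec_add_orthogonal[OF uc _ orth] Qp b by simp
  then show ?thesis
    unfolding u_def using sq_norm_vec_nonneg[of "Q *\<^sub>v p - b"] by simp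
qed

section \<open>The two error bounds\<close>

lemma col_mult_minus:
  assumes "A \<in> carrier_mat s n" "B \<in> carrier_mat n m" "C \<in> carrier_mat s m" "j < m"
  shows "col (A * B - C) j = A *\<^sub>v col B j - col C j"
  using assms by (auto intro!: eq_vecI)

lemma frob_norm_nonneg: "frob_norm A \<ge> 0"
  unfolding frob_norm_def by (intro real_sqrt_ge_zero sum_nonneg) auto

lemma best_rank_approx_frob_sq_le:
  assumes "best_rank_approx s m r A B" "C \<in> carrier_mat s m" "vec_space.rank s C \<le> r"
  shows "(frob_norm (A - B))\<^sup>2 \<le> (frob_norm (A - C))\<^sup>2"
  using assms frob_norm_nonneg unfolding best_rank_approx_def by (intro power_mono) auto

lemma U_proj_residuals_le_frob:
  fixes Q Um Br N :: "'a :: conjugatable_normed_field mat"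
  assumes pd: "self_adjoint_pd n (mat_adjoint Q * Q)" and Q: "Q \<in> carrier_mat s n"
    and Um: "Um \<in> carrier_mat n m" and Br: "Br \<in> carrier_mat s m" and N: "N \<in> carrier_mat n k"
    and W: "W = {N *\<^sub>v c | c. c \<in> carrier_vec k}"
    and Br_W: "\<And>j. j < m \<Longrightarrow>
      inv_mat (mat_adjoint Q * Q) *\<^sub>v (mat_adjoint Q *\<^sub>v col Br j) \<in> W"
  shows "(\<Sum>j<m. (U_norm (mat_adjoint Q * Q) (col Um j - U_proj (mat_adjoint Q * Q) W (col Um j)))\<^sup>2)
    \<le> (frob_norm (Q * Um - Br))\<^sup>2"
proof -
  let ?R = "mat_adjoint Q * Q" and ?p = "\<lambda>j. U_proj (mat_adjoint Q * Q) W (col Um j)"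
  have W_carrier: "W \<subseteq> carrier_vec n"
    unfolding W using N by auto
  note R_inv = self_adjoint_pd_inv_mat(2,1)[OF pd]
  have "(U_norm ?R (col Um j - ?p j))\<^sup>2 \<le> sq_norm_vec (col (Q * Um - Br) j)" if j: "j < m" for j
  proof -
    have x: "col Um j \<in> carrier_vec n"
      using Um j by simp
    note p = U_proj_range[OF pd Q N x W]
    have "(U_norm ?R (col Um j - ?p j))\<^sup>2 = sq_norm_vec (Q *\<^sub>v (col Um j - ?p j))"
      using U_norm_gram_sq[OF Q] x p(1) W_carrier by auto
    also have "\<dots> \<le> sq_norm_vec (Q *\<^sub>v col Um j - col Br j)"
      using Br j by (intro U_proj_residual_le[OF Q x _ W_carrier p R_inv Br_W[OF j]]) simp
    also have "Q *\<^sub>v col Um j - col Br j = col (Q * Um - Br) j"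
      using col_mult_minus[OF Q Um Br j] by simp
    finally show ?thesis .
  qed
  then have "(\<Sum>j<m. (U_norm ?R (col Um j - ?p j))\<^sup>2) \<le> (\<Sum>j<m. sq_norm_vec (col (Q * Um - Br) j))"
    by (rule sum_mono) simp
  also have "\<dots> = (frob_norm (Q * Um - Br))\<^sup>2"
    using frob_norm_sq_cols[of "Q * Um - Br"] Br by simp
  finally show ?thesis .
qed

lemma best_rank_approx_le_U_proj_residuals:
  fixes Q Um Bstar N :: "'a :: conjugatable_normed_field mat"
  assumes pd: "self_adjoint_pd n (mat_adjoint Q * Q)" and Q: "Q \<in> carrier_mat s n"
    and Um: "Um \<in> carrier_mat n m" and N: "N \<in> carrier_mat n r"
    and W: "W = {N *\<^sub>v c | c. c \<in> carrier_vec r}"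
    and best: "best_rank_approx s m r (Q * Um) Bstar"
  shows "(frob_norm (Q * Um - Bstar))\<^sup>2
    \<le> (\<Sum>j<m. (U_norm (mat_adjoint Q * Q) (col Um j - U_proj (mat_adjoint Q * Q) W (col Um j)))\<^sup>2)"
proof -
  interpret V: vec_space "TYPE('a)" s .
  let ?R = "mat_adjoint Q * Q" and ?p = "\<lambda>j. U_proj (mat_adjoint Q * Q) W (col Um j)"
  have x: "col Um j \<in> carrier_vec n" if "j < m" for j
    using Um that by simp
  have p: "?p j \<in> W" if "j < m" for j
    using U_proj_range(1)[OF pd Q N x[OF that] W] .
  have p_carrier: "?p j \<in> carrier_vec n" if "j < m" for j
    using p[OF that] N unfolding W by auto
  define Bp where "Bp = mat s m (\<lambda>(i, j). (Q *\<^sub>v ?p j) $ i)"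
  have Bp: "Bp \<in> carrier_mat s m"
    unfolding Bp_def by simp
  have col_Bp: "col Bp j = Q *\<^sub>v ?p j" if "j < m" for j
    unfolding Bp_def using that Q p_carrier[OF that] by (auto intro!: eq_vecI)
  have QN: "Q * N \<in> carrier_mat s r"
    using Q N by simp
  have "vec_space.rank s Bp \<le> r"
  proof (rule V.rank_le_if_cols_in_range[OF Bp QN])
    fix j assume j: "j < m"
    obtain d where d: "d \<in> carrier_vec r" "?p j = N *\<^sub>v d"
      using p[OF j] unfolding W by blast
    then show "\<exists>d \<in> carrier_vec r. col Bp j = (Q * N) *\<^sub>v d"
      unfolding col_Bp[OF j] using Q N by auto
  qed
  then have "(frob_norm (Q * Um - Bstar))\<^sup>2 \<le> (frob_norm (Q * Um - Bp))\<^sup>2"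
    using best_rank_approx_frob_sq_le[OF best Bp] by blast
  also have "\<dots> = (\<Sum>j<m. sq_norm_vec (col (Q * Um - Bp) j))"
    using frob_norm_sq_cols[of "Q * Um - Bp"] Bp by simp
  also have "\<dots> = (\<Sum>j<m. (U_norm ?R (col Um j - ?p j))\<^sup>2)"
  proof (rule sum.cong)
    fix j assume "j \<in> {..<m}"
    then have j: "j < m" by simp
    have "col (Q * Um - Bp) j = Q *\<^sub>v (col Um j - ?p j)"
      using col_mult_minus[OF Q Um Bp j] col_Bp[OF j] Q x[OF j] p_carrier[OF j]
      by (simp add: mult_minus_distrib_mat_vec)
    then show "sq_norm_vec (col (Q * Um - Bp) j) = (U_norm ?R (col Um j - ?p j))\<^sup>2"
      using U_norm_gram_sq[OF Q] x[OF j] p_carrier[OF j] by simp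
  qed simp
  finally show ?thesis .
qed

lemma U_r_space_eq_range:
  fixes R Q Br T :: "'a :: conjugatable_field mat"
  assumes P: "inv_mat R \<in> carrier_mat n n" and Q: "Q \<in> carrier_mat s n" and T: "T \<in> carrier_mat s k"
    and T_Br: "vec_space.col_space s T = vec_space.col_space s Br"
  shows "U_r_space s R Q Br = {(inv_mat R * mat_adjoint Q * T) *\<^sub>v d | d. d \<in> carrier_vec k}"
proof -
  interpret V: vec_space "TYPE('a)" s .
  have QH: "mat_adjoint Q \<in> carrier_mat n s"
    using Q by (rule mat_adjoint_carrier_mat)
  have "V.col_space Br = (\<lambda>d. T *\<^sub>v d) ` carrier_vec k"
    using V.col_space_eq[OF T] T unfolding T_Br by auto
  then have "U_r_space s R Q Br
      = (\<lambda>d. inv_mat R *\<^sub>v (mat_adjoint Q *\<^sub>v (T *\<^sub>v d))) ` carrier_vec k"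
    unfolding U_r_space_def by auto
  also have "\<dots> = (\<lambda>d. (inv_mat R * mat_adjoint Q * T) *\<^sub>v d) ` carrier_vec k"
  proof (rule image_cong[OF refl])
    fix d :: "'a vec" assume d: "d \<in> carrier_vec k"
    have "(inv_mat R * mat_adjoint Q * T) *\<^sub>v d = (inv_mat R * mat_adjoint Q) *\<^sub>v (T *\<^sub>v d)"
      by (rule assoc_mult_mat_vec[OF mult_carrier_mat[OF P QH] T d])
    also have "\<dots> = inv_mat R *\<^sub>v (mat_adjoint Q *\<^sub>v (T *\<^sub>v d))"
      using T d by (intro assoc_mult_mat_vec[OF P QH]) simp
    finally show "inv_mat R *\<^sub>v (mat_adjoint Q *\<^sub>v (T *\<^sub>v d))
        = (inv_mat R * mat_adjoint Q * T) *\<^sub>v d"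
      by simp
  qed
  finally show ?thesis
    by blast
qed

lemma best_rank_approx_U_proj_error_bounds:
  fixes R Q Um Bstar Br :: "'a :: conjugatable_normed_field mat"
  assumes pd: "self_adjoint_pd n R" and Um: "Um \<in> carrier_mat n m" and Q: "Q \<in> carrier_mat s n"
    and QR: "mat_adjoint Q * Q = R" and best: "best_rank_approx s m r (Q * Um) Bstar"
    and Br: "Br \<in> carrier_mat s m" and rank: "vec_space.rank s Br = r"
  shows "(1 / real m) * (frob_norm (Q * Um - Bstar))\<^sup>2
        \<le> (1 / real m) * (\<Sum>i<m. (U_norm R (col Um i - U_proj R (U_r_space s R Q Br) (col Um i)))\<^sup>2)"
    and "(1 / real m) * (\<Sum>i<m. (U_norm R (col Um i - U_proj R (U_r_space s R Q Br) (col Um i)))\<^sup>2)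
        \<le> (1 / real m) * (frob_norm (Q * Um - Br))\<^sup>2"
proof -
  interpret V: vec_space "TYPE('a)" s .
  obtain T where T: "T \<in> carrier_mat s r" "V.col_space T = V.col_space Br"
    using V.col_space_generated_by_rank_cols[OF Br] rank by blast
  define N where "N = inv_mat R * mat_adjoint Q * T"
  have inv: "inv_mat R \<in> carrier_mat n n"
    using self_adjoint_pd_inv_mat(1)[OF pd] .
  have N: "N \<in> carrier_mat n r"
    unfolding N_def using inv mat_adjoint_carrier_mat[OF Q] T(1) by simp
  have W: "U_r_space s R Q Br = {N *\<^sub>v d | d. d \<in> carrier_vec r}"
    unfolding N_def using U_r_space_eq_range[OF inv Q T] .
  have Br_W: "inv_mat R *\<^sub>v (mat_adjoint Q *\<^sub>v col Br j) \<in> U_r_space s R Q Br" if "j < m" for j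
  proof -
    have "col Br j \<in> V.col_space Br"
      unfolding V.col_space_def using Br that cols_dim by (intro V.span_mem) (auto simp: cols_def)
    then show ?thesis
      unfolding U_r_space_def by blast
  qed
  note pd_gram = pd[folded QR]
  have "(frob_norm (Q * Um - Bstar))\<^sup>2
      \<le> (\<Sum>i<m. (U_norm R (col Um i - U_proj R (U_r_space s R Q Br) (col Um i)))\<^sup>2)"
    using best_rank_approx_le_U_proj_residuals[OF pd_gram Q Um N W[folded QR] best] unfolding QR .
  moreover have "(\<Sum>i<m. (U_norm R (col Um i - U_proj R (U_r_space s R Q Br) (col Um i)))\<^sup>2)
      \<le> (frob_norm (Q * Um - Br))\<^sup>2"
    using U_proj_residuals_le_frob[OF pd_gram Q Um Br N W[folded QR] Br_W[folded QR]] unfolding QR .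
  ultimately show "(1 / real m) * (frob_norm (Q * Um - Bstar))\<^sup>2
        \<le> (1 / real m) * (\<Sum>i<m. (U_norm R (col Um i - U_proj R (U_r_space s R Q Br) (col Um i)))\<^sup>2)"
    and "(1 / real m) * (\<Sum>i<m. (U_norm R (col Um i - U_proj R (U_r_space s R Q Br) (col Um i)))\<^sup>2)
        \<le> (1 / real m) * (frob_norm (Q * Um - Br))\<^sup>2"
    by (simp_all add: divide_right_mono)
qed

theorem proposition2p4:
  shows
  "(\<forall>(n::nat) (m::nat) (s::nat) (r::nat) (R::real mat) (Q::real mat) (Um::real mat)
       (Bstar::real mat) (Br::real mat).
      self_adjoint_pd n R \<longrightarrow> Um \<in> carrier_mat n m \<longrightarrow>
      Q \<in> carrier_mat s n \<longrightarrow> mat_adjoint Q * Q = R \<longrightarrow>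
      best_rank_approx s m r (Q * Um) Bstar \<longrightarrow>
      Br \<in> carrier_mat s m \<longrightarrow> vec_space.rank s Br = r \<longrightarrow>
      (1 / real m) * (frob_norm (Q * Um - Bstar))\<^sup>2
        \<le> (1 / real m) * (\<Sum>i<m. (U_norm R (col Um i - U_proj R (U_r_space s R Q Br) (col Um i)))\<^sup>2)
      \<and> (1 / real m) * (\<Sum>i<m. (U_norm R (col Um i - U_proj R (U_r_space s R Q Br) (col Um i)))\<^sup>2)
        \<le> (1 / real m) * (frob_norm (Q * Um - Br))\<^sup>2)
   \<and>
   (\<forall>(n::nat) (m::nat) (s::nat) (r::nat) (R::complex mat) (Q::complex mat) (Um::complex mat)
       (Bstar::complex mat) (Br::complex mat).
      self_adjoint_pd n R \<longrightarrow> Um \<in> carrier_mat n m \<longrightarrow>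
      Q \<in> carrier_mat s n \<longrightarrow> mat_adjoint Q * Q = R \<longrightarrow>
      best_rank_approx s m r (Q * Um) Bstar \<longrightarrow>
      Br \<in> carrier_mat s m \<longrightarrow> vec_space.rank s Br = r \<longrightarrow>
      (1 / real m) * (frob_norm (Q * Um - Bstar))\<^sup>2
        \<le> (1 / real m) * (\<Sum>i<m. (U_norm R (col Um i - U_proj R (U_r_space s R Q Br) (col Um i)))\<^sup>2)
      \<and> (1 / real m) * (\<Sum>i<m. (U_norm R (col Um i - U_proj R (U_r_space s R Q Br) (col Um i)))\<^sup>2)
        \<le> (1 / real m) * (frob_norm (Q * Um - Br))\<^sup>2)"
  by (intro conjI allI impI; rule best_rank_approx_U_proj_error_bounds; assumption)

end
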